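(* Let $d\ge 1$ be an integer and consider the $d$-dimensional Parallel Random Apollonian Network (P-RAN) process described in the context. For an integer $m\ge 0$ let $Nc_t(m)$ be the number of $(d+1)$-cliques in the list $C_t$ having parallel degree $m$ after $t$ steps, and let $|C_t| = d+2+t(d+1)$ be the total number of cliques in $C_t$. Then for every $m\ge 0$, the fraction $\mathbb{E}[Nc_t(m)]/|C_t|$ converges as $t\to\infty$ to $$Pc(m)=\frac{d+1}{(d+2)^{m+1}},$$ i.e. for large $t$ the parallel degree distribution of the P-RAN asymptotically follows this geometric distribution.
   Context: P-RAN process in dimension $d$: at step $t=0$ the graph is a complete graph on $d+2$ vertices, and the list $C_0$ consists of its $d+2$ $(d+1)$-cliques (vertex subsets of size $d+1$). At each step $t\to t+1$, a clique $c$ is chosen uniformly at random from the current list $C_t$; a new vertex $v$ is added to the graph and joined by edges to all $d+1$ vertices of $c$; the clique $c$ stays in the list and the $d+1$ new $(d+1)$-cliques of the form $\{v\}\cup (c\setminus\{u\})$, $u\in c$, are appended to the list. Thus $|C_t|=d+2+t(d+1)$ and the graph has $d+2+t$ vertices. The parallel degree of a clique $c$ in the list is the number of vertices that have been inserted into $c$ (i.e. the number of steps at which $c$ was the chosen clique); newly created cliques have parallel degree $0$. *)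

theory Defs
  imports "HOL-Probability.Probability"
begin

text \<open>State of the P-RAN process: (number of vertices n, edge set, clique list).
  Vertices are 0..<n; an edge is a 2-element set of vertices; the clique list
  is a list of pairs (vertex set of a (d+1)-clique, its parallel degree).\<close>
type_synonym pran_state = "nat \<times> nat set set \<times> (nat set \<times> nat) list"

definition pran_init :: "nat \<Rightarrow> pran_state" where
  "pran_init d = (d + 2, {{x, y} | x y. x < d + 2 \<and> y < d + 2 \<and> x \<noteq> y},
     map (\<lambda>u. ({0..<d+2} - {u}, 0)) [0..<d+2])"

definition pran_step :: "pran_state \<Rightarrow> pran_state pmf" where
  "pran_step s = (case s of (n, E, L) \<Rightarrow>
     map_pmf (\<lambda>i. (case L ! i of (c, k) \<Rightarrow>
        (Suc n, E \<union> {{n, u} | u. u \<in> c},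
         L[i := (c, Suc k)] @ map (\<lambda>u. (insert n (c - {u}), 0)) (sorted_list_of_set c))))
       (pmf_of_set {..<length L}))"

primrec pran :: "nat \<Rightarrow> nat \<Rightarrow> pran_state pmf" where
  "pran d 0 = return_pmf (pran_init d)"
| "pran d (Suc t) = pran d t \<bind> pran_step"

definition Nc :: "nat \<Rightarrow> pran_state \<Rightarrow> nat" where
  "Nc m s = length (filter (\<lambda>ck. snd ck = m) (snd (snd s)))"

end

theory Submission
  imports Defs
begin

text \<open>
  Write \<open>L\<^sub>t = d + 2 + t(d + 1)\<close> for the length of the clique list and \<open>E\<^sub>t(m)\<close> for the
  expected number of cliques of parallel degree \<open>m\<close>. A step chooses a clique of degree \<open>m\<close> with
  probability \<open>Nc\<^sub>t(m)/L\<^sub>t\<close>, moving it to degree \<open>m + 1\<close>, and always adds \<open>d + 1\<close> cliques of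
  degree \<open>0\<close>; hence \<open>E\<^sub>t\<^sub>+\<^sub>1(m) = (1 - 1/L\<^sub>t) E\<^sub>t(m) + E\<^sub>t(m - 1)/L\<^sub>t\<close>, plus \<open>d + 1\<close> if \<open>m = 0\<close>.
  For the fractions \<open>x\<^sub>t = E\<^sub>t(m)/L\<^sub>t\<close> this is a relaxation
  \<open>x\<^sub>t\<^sub>+\<^sub>1 = (1 - r\<^sub>t) x\<^sub>t + r\<^sub>t F\<^sub>t\<close> with rate \<open>r\<^sub>t = (d + 2)/L\<^sub>t\<^sub>+\<^sub>1 \<ge> 1/(t + 2)\<close> towards
  \<open>F\<^sub>t = x\<^sub>t(m - 1)/(d + 2)\<close> (resp. \<open>(d + 1)/(d + 2)\<close> if \<open>m = 0\<close>). Since the rates are not summable,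
  \<open>x\<^sub>t\<close> inherits the limit of \<open>F\<^sub>t\<close>, and induction on \<open>m\<close> gives \<open>Pc(m) = Pc(m - 1)/(d + 2)\<close>.
\<close>

lemma length_filter_list_update:
  assumes "i < length xs"
  shows "length (filter P (xs[i := x])) + of_bool (P (xs ! i)) = length (filter P xs) + of_bool (P x)"
  using assms
proof (induction xs arbitrary: i)
  case (Cons y xs)
  then show ?case by (cases i) auto
qed simp

lemma sum_of_bool_nth_eq_length_filter:
  "(\<Sum>i<length xs. of_bool (P (xs ! i))) = (of_nat (length (filter P xs)) :: 'a :: semiring_1)"
  by (simp add: length_filter_conv_card Int_def)

lemma LIMSEQ_zero_if_Suc_mult_decreasing:
  fixes z :: "nat \<Rightarrow> real"
  assumes nonneg: "\<And>t. 0 \<le> z t"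
    and decreasing: "\<And>t. t \<ge> N \<Longrightarrow> (real t + 2) * z (Suc t) \<le> (real t + 1) * z t"
  shows "z \<longlonglongrightarrow> 0"
proof (rule tendsto_sandwich[where f = "\<lambda>_. 0"])
  have bound: "(real t + 1) * z t \<le> (real N + 1) * z N" if "t \<ge> N" for t
    using that
  proof (induction t rule: dec_induct)
    case (step t)
    then show ?case using decreasing[of t] by (simp add: add.commute)
  qed simp
  show "\<forall>\<^sub>F t in sequentially. z t \<le> (real N + 1) * z N * inverse (real (Suc t))"
    using bound by (auto simp: eventually_sequentially field_simps)
  show "(\<lambda>t. (real N + 1) * z N * inverse (real (Suc t))) \<longlonglongrightarrow> 0"
    by (rule tendsto_mult_right_zero[OF LIMSEQ_inverse_real_of_nat])
qed (use nonneg in auto)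

lemma LIMSEQ_relaxation:
  fixes x F r :: "nat \<Rightarrow> real"
  assumes recurrence: "\<And>t. x (Suc t) = (1 - r t) * x t + r t * F t"
    and r_lower: "\<And>t. 1 / (real t + 2) \<le> r t" and r_upper: "\<And>t. r t \<le> 1"
    and F: "F \<longlonglongrightarrow> c"
  shows "x \<longlonglongrightarrow> c"
proof (rule LIMSEQ_I)
  fix \<epsilon> :: real
  assume "\<epsilon> > 0"
  then obtain N where N: "\<And>t. t \<ge> N \<Longrightarrow> \<bar>F t - c\<bar> < \<epsilon> / 2"
    using LIMSEQ_D[OF F, of "\<epsilon> / 2"] by auto
  \<comment> \<open>Once \<open>F\<close> is \<open>\<epsilon>/2\<close>-close to \<open>c\<close>, the excess of \<open>\<bar>x t - c\<bar>\<close> over \<open>\<epsilon>/2\<close> shrinks by the factor \<open>1 - r t \<le> (t + 1)/(t + 2)\<close>.\<close>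
  define z where "z t = max (\<bar>x t - c\<bar> - \<epsilon> / 2) 0" for t
  have z_nonneg: "0 \<le> z t" for t
    by (simp add: z_def)
  have "(real t + 2) * z (Suc t) \<le> (real t + 1) * z t" if "t \<ge> N" for t
  proof -
    have r_nonneg: "0 \<le> r t"
      using r_lower[of t] divide_nonneg_nonneg[of 1 "real t + 2"] by linarith
    have "x (Suc t) - c = (1 - r t) * (x t - c) + r t * (F t - c)"
      using recurrence[of t] by (simp add: algebra_simps)
    then have "\<bar>x (Suc t) - c\<bar> \<le> (1 - r t) * \<bar>x t - c\<bar> + r t * \<bar>F t - c\<bar>"
      using r_nonneg r_upper[of t] abs_triangle_ineq by (metis abs_mult abs_of_nonneg diff_ge_0_iff_ge)
    also have "\<dots> \<le> (1 - r t) * \<bar>x t - c\<bar> + r t * (\<epsilon> / 2)"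
      using N[OF that] r_nonneg by (intro add_left_mono mult_left_mono) auto
    finally have "\<bar>x (Suc t) - c\<bar> - \<epsilon> / 2 \<le> (1 - r t) * (\<bar>x t - c\<bar> - \<epsilon> / 2)"
      by (simp add: algebra_simps diff_divide_distrib)
    also have "\<dots> \<le> (1 - r t) * z t"
      using r_upper[of t] unfolding z_def by (intro mult_left_mono) auto
    finally have "z (Suc t) \<le> (1 - r t) * z t"
      using r_upper[of t] z_nonneg[of t] unfolding z_def by simp
    then have "(real t + 2) * z (Suc t) \<le> ((real t + 2) * (1 - r t)) * z t"
      by (simp add: mult_left_mono)
    also have "\<dots> \<le> (real t + 1) * z t"
      using r_lower[of t] z_nonneg[of t] by (intro mult_right_mono) (auto simp: field_simps)
    finally show ?thesis .
  qed
  then have "z \<longlonglongrightarrow> 0"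
    using z_nonneg by (rule LIMSEQ_zero_if_Suc_mult_decreasing[rotated])
  then obtain M where "\<forall>t\<ge>M. norm (z t - 0) < \<epsilon> / 2"
    using LIMSEQ_D \<open>\<epsilon> > 0\<close> half_gt_zero by blast
  then have "norm (x t - c) < \<epsilon>" if "t \<ge> M" for t
    using that \<open>\<epsilon> > 0\<close> unfolding z_def by (auto simp: max_def split: if_splits)
  then show "\<exists>M. \<forall>t\<ge>M. norm (x t - c) < \<epsilon>"
    by blast
qed

definition num_cliques :: "nat \<Rightarrow> nat \<Rightarrow> nat" where
  "num_cliques d t = d + 2 + t * (d + 1)"

lemma num_cliques_pos: "0 < num_cliques d t"
  by (simp add: num_cliques_def)

definition pran_succ :: "pran_state \<Rightarrow> nat \<Rightarrow> pran_state" where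
  "pran_succ s i = (case s of (n, E, L) \<Rightarrow> case L ! i of (c, k) \<Rightarrow>
     (Suc n, E \<union> {{n, u} | u. u \<in> c},
      L[i := (c, Suc k)] @ map (\<lambda>u. (insert n (c - {u}), 0)) (sorted_list_of_set c)))"

lemma pran_step_eq_map_pmf:
  "pran_step s = map_pmf (pran_succ s) (pmf_of_set {..<length (snd (snd s))})"
  by (cases s) (simp add: pran_step_def pran_succ_def[abs_def])

definition pran_wf :: "nat \<Rightarrow> nat \<Rightarrow> pran_state \<Rightarrow> bool" where
  "pran_wf d t = (\<lambda>(n, E, L). length L = num_cliques d t \<and>
     (\<forall>(c, k) \<in> set L. c \<subseteq> {..<n} \<and> card c = d + 1))"

lemma pran_wf_init: "pran_wf d 0 (pran_init d)"
  by (auto simp: pran_wf_def pran_init_def num_cliques_def)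

lemma pran_wf_succ:
  assumes wf: "pran_wf d t (n, E, L)" and i: "i < length L"
  shows "pran_wf d (Suc t) (pran_succ (n, E, L) i)"
proof -
  obtain c k where ck: "L ! i = (c, k)"
    by fastforce
  have clique: "c' \<subseteq> {..<n} \<and> card c' = d + 1" if "(c', k') \<in> set L" for c' k'
    using wf that by (auto simp: pran_wf_def)
  have c: "c \<subseteq> {..<n}" "card c = d + 1"
    using clique[of c k] ck i by (metis nth_mem)+
  then have "finite c" "n \<notin> c"
    using finite_lessThan finite_subset by blast+
  have old: "c' \<subseteq> {..<Suc n} \<and> card c' = d + 1" if "(c', k') \<in> set (L[i := (c, Suc k)])" for c' k'
  proof -
    have "(c', k') = (c, Suc k) \<or> (c', k') \<in> set L"
      using set_update_subset_insert[of L i "(c, Suc k)"] that by auto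
    then show ?thesis
      using clique[of c' k'] c by (auto simp: lessThan_Suc)
  qed
  have new: "insert n (c - {u}) \<subseteq> {..<Suc n} \<and> card (insert n (c - {u})) = d + 1" if "u \<in> c" for u
    using \<open>finite c\<close> \<open>n \<notin> c\<close> c that by (auto simp: card_Diff_singleton)
  let ?L' = "L[i := (c, Suc k)] @ map (\<lambda>u. (insert n (c - {u}), 0::nat)) (sorted_list_of_set c)"
  have succ: "pran_succ (n, E, L) i = (Suc n, E \<union> {{n, u} | u. u \<in> c}, ?L')"
    by (simp add: pran_succ_def ck)
  have "length ?L' = num_cliques d (Suc t)"
    using wf c(2) by (simp add: pran_wf_def num_cliques_def)
  moreover have "c' \<subseteq> {..<Suc n} \<and> card c' = d + 1" if mem: "(c', k') \<in> set ?L'" for c' k'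
  proof -
    consider "(c', k') \<in> set (L[i := (c, Suc k)])" | u where "u \<in> c" "c' = insert n (c - {u})"
      using mem \<open>finite c\<close> by auto
    then show ?thesis
      using old new by cases blast+
  qed
  ultimately show ?thesis
    unfolding succ pran_wf_def prod.case by blast
qed

lemma set_pmf_pran_step:
  assumes "pran_wf d t s"
  shows "set_pmf (pran_step s) = pran_succ s ` {..<length (snd (snd s))}"
proof -
  have "{..<length (snd (snd s))} \<noteq> {}"
    using assms by (auto simp: pran_wf_def num_cliques_def split: prod.splits)
  then show ?thesis
    by (simp add: pran_step_eq_map_pmf)
qed

lemma pran_wf_pran: "s \<in> set_pmf (pran d t) \<Longrightarrow> pran_wf d t s"
proof (induction t arbitrary: s)
  case 0
  then show ?case
    by (simp add: pran_wf_init)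
next
  case (Suc t)
  then obtain n E L where s': "(n, E, L) \<in> set_pmf (pran d t)" and "s \<in> set_pmf (pran_step (n, E, L))"
    by auto
  moreover have wf: "pran_wf d t (n, E, L)"
    using Suc.IH[OF s'] .
  ultimately obtain i where "i < length L" "s = pran_succ (n, E, L) i"
    using set_pmf_pran_step[OF wf] by auto
  then show ?case
    using pran_wf_succ[OF wf] by simp
qed

lemma finite_set_pmf_pran: "finite (set_pmf (pran d t))"
proof (induction t)
  case (Suc t)
  then show ?case
    using set_pmf_pran_step[OF pran_wf_pran] by auto
qed simp

lemma Nc_pran_succ:
  assumes wf: "pran_wf d t (n, E, L)" and i: "i < length L"
  shows "Nc m (pran_succ (n, E, L) i) + of_bool (snd (L ! i) = m)
       = Nc m (n, E, L) + of_bool (Suc (snd (L ! i)) = m) + of_bool (m = 0) * (d + 1)"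
proof -
  obtain c k where ck: "L ! i = (c, k)"
    by fastforce
  have "card c = d + 1"
    using wf nth_mem[OF i] by (auto simp: pran_wf_def ck)
  then have "length (filter (\<lambda>ck. snd ck = m) (map (\<lambda>u. (insert n (c - {u}), 0::nat)) (sorted_list_of_set c)))
      = of_bool (m = 0) * (d + 1)"
    by (auto simp: filter_map comp_def)
  then have "Nc m (pran_succ (n, E, L) i)
      = length (filter (\<lambda>ck. snd ck = m) (L[i := (c, Suc k)])) + of_bool (m = 0) * (d + 1)"
    by (simp add: Nc_def pran_succ_def ck)
  moreover have "length (filter (\<lambda>ck. snd ck = m) (L[i := (c, Suc k)])) + of_bool (k = m)
      = Nc m (n, E, L) + of_bool (Suc k = m)"
    using length_filter_list_update[OF i, of "\<lambda>ck. snd ck = m" "(c, Suc k)"]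
    by (simp add: Nc_def ck)
  ultimately show ?thesis
    by (simp add: ck)
qed

lemma length_filter_Suc_snd_eq:
  "length (filter (\<lambda>ck. Suc (snd ck) = m) L) = (if m = 0 then 0 else length (filter (\<lambda>ck. snd ck = m - 1) L))"
  by (cases m) simp_all

lemma sum_Nc_pran_succ:
  assumes wf: "pran_wf d t (n, E, L)"
  defines "s \<equiv> (n, E, L)"
  shows "(\<Sum>i<length L. real (Nc m (pran_succ s i)))
       = real (length L) * real (Nc m s) - real (Nc m s) + (if m = 0 then 0 else real (Nc (m - 1) s))
         + real (length L) * (of_bool (m = 0) * real (d + 1))"
proof -
  have "(\<Sum>i<length L. real (Nc m (pran_succ s i)))
      = (\<Sum>i<length L. real (Nc m s) - of_bool (snd (L ! i) = m) + of_bool (Suc (snd (L ! i)) = m)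
                        + of_bool (m = 0) * real (d + 1))"
  proof (rule sum.cong)
    fix i
    assume "i \<in> {..<length L}"
    then have "i < length L"
      by simp
    from arg_cong[where f = real, OF Nc_pran_succ[OF wf this, of m]]
    show "real (Nc m (pran_succ s i)) = real (Nc m s) - of_bool (snd (L ! i) = m)
        + of_bool (Suc (snd (L ! i)) = m) + of_bool (m = 0) * real (d + 1)"
      unfolding s_def of_nat_add of_nat_mult of_nat_of_bool by linarith
  qed simp
  moreover have "(\<Sum>i<length L. of_bool (snd (L ! i) = m)) = real (Nc m s)"
    using sum_of_bool_nth_eq_length_filter[where 'a = real, of "\<lambda>ck. snd ck = m" L]
    by (simp add: Nc_def s_def del: sum_of_bool_eq)
  moreover have "(\<Sum>i<length L. of_bool (Suc (snd (L ! i)) = m))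
      = (if m = 0 then 0 else real (Nc (m - 1) s))"
    using sum_of_bool_nth_eq_length_filter[where 'a = real, of "\<lambda>ck. Suc (snd ck) = m" L]
    by (simp add: Nc_def s_def length_filter_Suc_snd_eq del: sum_of_bool_eq)
  ultimately show ?thesis
    by (simp add: sum.distrib sum_subtractf del: sum_of_bool_eq)
qed

lemma expectation_Nc_pran_step:
  assumes wf: "pran_wf d t s"
  shows "measure_pmf.expectation (pran_step s) (\<lambda>s. real (Nc m s))
       = (1 - 1 / real (num_cliques d t)) * real (Nc m s)
         + (if m = 0 then 0 else real (Nc (m - 1) s)) / real (num_cliques d t)
         + of_bool (m = 0) * real (d + 1)"
proof -
  obtain n E L where s: "s = (n, E, L)"
    by (cases s)
  define N where "N = real (num_cliques d t)"
  have "N > 0"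
    by (simp add: N_def num_cliques_pos)
  have len: "real (length L) = N"
    using wf by (simp add: s pran_wf_def N_def)
  then have "{..<length L} \<noteq> {}"
    using \<open>N > 0\<close> by (auto simp: lessThan_empty_iff)
  then have "measure_pmf.expectation (pran_step s) (\<lambda>s. real (Nc m s))
      = (\<Sum>i<length L. real (Nc m (pran_succ s i))) / N"
    by (simp add: pran_step_eq_map_pmf s integral_pmf_of_set len)
  moreover have "(N * X - X + P + N * D) / N = (1 - 1 / N) * X + P / N + D" for X P D :: real
    using \<open>N > 0\<close> by (simp add: field_simps)
  ultimately show ?thesis
    using sum_Nc_pran_succ[OF wf[unfolded s], of m] unfolding s len N_def by simp
qed

lemma expectation_bind_pmf_finite:
  fixes h :: "'b \<Rightarrow> 'c::{banach, second_countable_topology}"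
  assumes "finite (set_pmf p)" and "\<And>x. x \<in> set_pmf p \<Longrightarrow> finite (set_pmf (f x))"
  shows "measure_pmf.expectation (p \<bind> f) h
       = measure_pmf.expectation p (\<lambda>x. measure_pmf.expectation (f x) h)"
  using assms by (simp add: pmf_expectation_bind[OF assms(1,2) order_refl] integral_measure_pmf)

definition expected_Nc :: "nat \<Rightarrow> nat \<Rightarrow> nat \<Rightarrow> real" where
  "expected_Nc d t m = measure_pmf.expectation (pran d t) (\<lambda>s. real (Nc m s))"

lemma expected_Nc_Suc:
  "expected_Nc d (Suc t) m
     = (1 - 1 / real (num_cliques d t)) * expected_Nc d t m
       + (if m = 0 then 0 else expected_Nc d t (m - 1)) / real (num_cliques d t)
       + of_bool (m = 0) * real (d + 1)"
proof -
  let ?p = "pran d t"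
  have finite: "finite (set_pmf ?p)"
    by (rule finite_set_pmf_pran)
  then have integrable: "integrable (measure_pmf ?p) g" for g :: "pran_state \<Rightarrow> real"
    by (rule integrable_measure_pmf_finite)
  have "expected_Nc d (Suc t) m = measure_pmf.expectation ?p
      (\<lambda>s. measure_pmf.expectation (pran_step s) (\<lambda>s. real (Nc m s)))"
    unfolding expected_Nc_def pran.simps
    using finite set_pmf_pran_step[OF pran_wf_pran] by (intro expectation_bind_pmf_finite) auto
  also have "\<dots> = measure_pmf.expectation ?p (\<lambda>s. (1 - 1 / real (num_cliques d t)) * real (Nc m s)
       + (if m = 0 then 0 else real (Nc (m - 1) s)) / real (num_cliques d t)
       + of_bool (m = 0) * real (d + 1))"
    by (intro integral_cong_AE AE_pmfI expectation_Nc_pran_step pran_wf_pran) simp_all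
  also have "\<dots> = (1 - 1 / real (num_cliques d t)) * expected_Nc d t m
       + (if m = 0 then 0 else expected_Nc d t (m - 1)) / real (num_cliques d t)
       + of_bool (m = 0) * real (d + 1)"
    by (cases "m = 0") (simp_all add: expected_Nc_def integrable)
  finally show ?thesis .
qed

definition Nc_fraction :: "nat \<Rightarrow> nat \<Rightarrow> nat \<Rightarrow> real" where
  "Nc_fraction d t m = expected_Nc d t m / real (num_cliques d t)"

text \<open>The rate is \<open>(d + 2)/L\<^sub>t\<^sub>+\<^sub>1\<close> because \<open>L\<^sub>t\<^sub>+\<^sub>1 - (d + 2) = L\<^sub>t - 1\<close>.\<close>

lemma Nc_fraction_Suc:
  fixes d t m :: nat
  defines "r \<equiv> real (d + 2) / real (num_cliques d (Suc t))"
  shows "Nc_fraction d (Suc t) m = (1 - r) * Nc_fraction d t m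
     + r * ((if m = 0 then real (d + 1) else Nc_fraction d t (m - 1)) / real (d + 2))"
proof -
  define L where "L = real (num_cliques d t)"
  define G where "G = (if m = 0 then real (d + 1) else Nc_fraction d t (m - 1))"
  have "L > 0"
    by (simp add: L_def num_cliques_pos)
  have L_Suc: "real (num_cliques d (Suc t)) = L + real (d + 1)"
    by (simp add: L_def num_cliques_def)
  have expected_Nc_Suc_eq: "expected_Nc d (Suc t) m = (1 - 1 / L) * expected_Nc d t m + G"
    by (simp add: expected_Nc_Suc G_def L_def Nc_fraction_def)
  have relaxation: "((1 - 1 / L) * X + G) / (L + D) = (1 - (D + 1) / (L + D)) * (X / L) + (D + 1) / (L + D) * (G / (D + 1))"
    if "D \<ge> 0" for X D :: real
  proof -
    have "L \<noteq> 0" "L + D \<noteq> 0" "D + 1 \<noteq> 0"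
      using \<open>L > 0\<close> that by linarith+
    then have "(1 - 1 / L) * X = (L - 1) * (X / L)"
      and "1 - (D + 1) / (L + D) = (L - 1) / (L + D)"
      by (simp_all add: field_simps)
    moreover have "(D + 1) / (L + D) * (G / (D + 1)) = G / (L + D)"
      using \<open>D + 1 \<noteq> 0\<close> by simp
    ultimately show ?thesis
      by (simp only:) (simp add: add_divide_distrib)
  qed
  have "real (d + 2) = real (d + 1) + 1"
    by simp
  then show ?thesis
    unfolding r_def G_def[symmetric] Nc_fraction_def[of d "Suc t"] Nc_fraction_def[of d t m]
      L_Suc L_def[symmetric] expected_Nc_Suc_eq
    by (simp only:) (rule relaxation, simp)
qed

lemma step_size_lower_bound:
  "1 / (real t + 2) \<le> real (d + 2) / real (num_cliques d (Suc t))"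
proof -
  have "real (num_cliques d (Suc t)) \<le> real (d + 2) * (real t + 2)"
    by (simp add: num_cliques_def algebra_simps)
  then have "real (d + 2) / (real (d + 2) * (real t + 2)) \<le> real (d + 2) / real (num_cliques d (Suc t))"
    by (intro divide_left_mono) (auto simp: num_cliques_pos)
  then show ?thesis
    by simp
qed

lemma step_size_upper_bound: "real (d + 2) / real (num_cliques d (Suc t)) \<le> 1"
proof -
  have "d + 2 \<le> num_cliques d (Suc t)"
    by (simp add: num_cliques_def)
  then show ?thesis
    using num_cliques_pos[of d "Suc t"] by simp
qed

lemma Nc_fraction_limit:
  "(\<lambda>t. Nc_fraction d t m) \<longlonglongrightarrow> real (d + 1) / real (d + 2) ^ (m + 1)"
proof (induction m)
  case 0
  show ?case
    by (rule LIMSEQ_relaxation[OF Nc_fraction_Suc step_size_lower_bound step_size_upper_bound]) simp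
next
  case (Suc m)
  have "(\<lambda>t. Nc_fraction d t m / real (d + 2)) \<longlonglongrightarrow> real (d + 1) / real (d + 2) ^ (m + 1) / real (d + 2)"
    by (intro tendsto_divide Suc.IH tendsto_const) simp
  also have "real (d + 1) / real (d + 2) ^ (m + 1) / real (d + 2) = real (d + 1) / real (d + 2) ^ (Suc m + 1)"
    by (simp add: power_Suc2 del: power_Suc)
  finally show ?case
    by (intro LIMSEQ_relaxation[OF Nc_fraction_Suc step_size_lower_bound step_size_upper_bound]) simp
qed

theorem mainTheorem1:
  fixes d m :: nat
  assumes "d \<ge> 1"
  shows "(\<lambda>t. measure_pmf.expectation (pran d t) (\<lambda>s. real (Nc m s))
               / real (d + 2 + t * (d + 1)))
         \<longlonglongrightarrow> real (d + 1) / real (d + 2) ^ (m + 1)"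
  using Nc_fraction_limit[of d m] by (simp add: Nc_fraction_def expected_Nc_def num_cliques_def)

end
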